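(* Consider the $T$-round online first-price auction problem and the AR-Prod policy described in the context, and assume $V_T=o(T)$. (i) If $V_T$ is known, restarting the Prod forecaster with translation $\mu_t=\max\{v_t-m_t,0\}$ every $\Delta_T$ rounds, with constant batch size $\Delta_T$ of order $\sqrt{T/V_T}$, achieves expected dynamic regret $\tilde{O}(\sqrt{TV_T})$ over all sequences in $\mathcal{V}$. (ii) If $V_T$ is unknown, the AR-Prod policy satisfies \[ \sup_{(v_t,m_t)_{t=1}^T\in\mathcal{V}}\mathbb{E}[\mathrm{DR}_T(\pi)]=\tilde{O}\left(\max\left\{\sqrt{TV_T},1\right\}\right). \]
   Context: Online first-price auction over $T$ rounds: at each round $t$ the learner observes a private value $v_t\in[0,1]$, submits a bid $b_t\in[0,1]$ (possibly randomized, depending only on past $(v_s,m_s)_{s<t}$ and $v_t$), then observes $m_t\in[0,1]$, the highest bid of the other bidders, and receives reward $r(b_t;v_t,m_t)$ with $r(b;v,m)\coloneqq(v-b)\mathbbm{1}(b\ge m)$. The expected dynamic regret is $\mathbb{E}[\mathrm{DR}_T(\pi)]\coloneqq\sum_{t=1}^T\max\{v_t-m_t,0\}-\sum_{t=1}^T\mathbb{E}[r(b_t;v_t,m_t)]$. For $V_T\ge0$, $\mathcal{V}\coloneqq\{(v_t,m_t)_{t=1}^T\in[0,1]^{2T}:\sum_{t=2}^T|m_t-m_{t-1}|\le V_T\}$. $\tilde{O}(\cdot)$ hides polylogarithmic factors in $T$. Prod forecaster: fix a precision $\epsilon$ and $N=1/\epsilon$ experts; expert $i\in\{1,\dots,N\}$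 bids $\min\{v_t,i\epsilon\}$ and has reward $r_{t,i}\coloneqq r(\min\{v_t,i\epsilon\};v_t,m_t)$. Starting from $p=(1/N,\dots,1/N)$, at round $t$ the bid $\min\{v_t,i\epsilon\}$ is chosen with probability $p_{t,i}$, and after observing $m_t$ the weights are updated as $p_{t+1,i}=\frac{(1+\eta(r_{t,i}-\mu_t))p_{t,i}}{\sum_{k=1}^N(1+\eta(r_{t,k}-\mu_t))p_{t,k}}$ with $\mu_t=\max\{v_t-m_t,0\}$. AR-Prod policy: set $\eta=\frac12$, $\epsilon=\frac1T$, $c=\frac1T$. Time is split into consecutive batches $\mathcal{T}_1,\mathcal{T}_2,\dots$; at the first round of each batch the Prod forecaster is restarted (weights reset to uniform). For the current batch $j$, let $\Delta_{T,j}$ be its current length and $V_{T,j}$ the temporal variation $\sum|m_t-m_{t-1}|$ of the opponents' highest bids over consecutive rounds within batch $j$ observed so far, with $V_{T,i}$ for $i<j$ the variations of completed batches. After each round of batch $j$ the quantities are updated, and batch $j$ continues as long as $\Delta_{T,j}<\sqrt{T/(\sum_{i=1}^jV_{T,i}+c)}$; otherwise a new batch begins at the next round. *)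

theory Defs
  imports Complex_Main "HOL-Library.Landau_Symbols"
begin

definition reward :: "real \<Rightarrow> real \<Rightarrow> real \<Rightarrow> real" where
  "reward b v m = (if b \<ge> m then v - b else 0)"

definition expert_reward :: "real \<Rightarrow> (nat \<Rightarrow> real) \<Rightarrow> (nat \<Rightarrow> real) \<Rightarrow> nat \<Rightarrow> nat \<Rightarrow> real" where
  "expert_reward eps v m t i = reward (min (v t) (real i * eps)) (v t) (m t)"

definition mu :: "(nat \<Rightarrow> real) \<Rightarrow> (nat \<Rightarrow> real) \<Rightarrow> nat \<Rightarrow> real" where
  "mu v m t = max (v t - m t) 0"

(* Rounds are numbered 1,2,...; 
   prod_w N eps eta R v m n i is the probability p_{n+1,i} of expert i at round n+1.
   R t holds iff the forecaster is restarted (weights reset to uniform) at the first round t of a batch. *)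
fun prod_w :: "nat \<Rightarrow> real \<Rightarrow> real \<Rightarrow> (nat \<Rightarrow> bool) \<Rightarrow> (nat \<Rightarrow> real) \<Rightarrow> (nat \<Rightarrow> real) \<Rightarrow> nat \<Rightarrow> nat \<Rightarrow> real" where
  "prod_w N eps eta R v m 0 i = 1 / real N"
| "prod_w N eps eta R v m (Suc n) i =
     (if R (n + 2) then 1 / real N
      else (let f = (\<lambda>k. (1 + eta * (expert_reward eps v m (n + 1) k - mu v m (n + 1)))
                           * prod_w N eps eta R v m n k)
            in f i / (\<Sum>k\<in>{1..N}. f k)))"

definition prod_exp_reward :: "nat \<Rightarrow> real \<Rightarrow> real \<Rightarrow> (nat \<Rightarrow> bool) \<Rightarrow> (nat \<Rightarrow> real) \<Rightarrow> (nat \<Rightarrow> real) \<Rightarrow> nat \<Rightarrow> real" where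
  "prod_exp_reward N eps eta R v m t =
     (\<Sum>i\<in>{1..N}. prod_w N eps eta R v m (t - 1) i * expert_reward eps v m t i)"

definition prod_regret :: "nat \<Rightarrow> nat \<Rightarrow> real \<Rightarrow> real \<Rightarrow> (nat \<Rightarrow> bool) \<Rightarrow> (nat \<Rightarrow> real) \<Rightarrow> (nat \<Rightarrow> real) \<Rightarrow> real" where
  "prod_regret T N eps eta R v m =
     (\<Sum>t\<in>{1..T}. mu v m t - prod_exp_reward N eps eta R v m t)"

definition seqs :: "nat \<Rightarrow> real \<Rightarrow> ((nat \<Rightarrow> real) \<times> (nat \<Rightarrow> real)) set" where
  "seqs T VT = {(v, m). (\<forall>t\<in>{1..T}. 0 \<le> v t \<and> v t \<le> 1 \<and> 0 \<le> m t \<and> m t \<le> 1)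
                       \<and> (\<Sum>t\<in>{2..T}. \<bar>m t - m (t - 1)\<bar>) \<le> VT}"

definition fixed_restart :: "nat \<Rightarrow> nat \<Rightarrow> bool" where
  "fixed_restart Delta t = ((t - 1) mod Delta = 0)"

(* AR-Prod batch state. ar_state T c m n = (s, W) describes round n+1:
   s = first round of the current batch, W = sum of variations V_{T,i} of completed batches.
   After round t = n+1: Delta_{T,j} = t - s + 1, V_{T,j} = sum_{u=s+1..t} |m u - m (u-1)|;
   the batch continues iff Delta_{T,j} < sqrt(T / (W + V_{T,j} + c)). *)
fun ar_state :: "nat \<Rightarrow> real \<Rightarrow> (nat \<Rightarrow> real) \<Rightarrow> nat \<Rightarrow> nat \<times> real" where
  "ar_state T c m 0 = (1, 0)"
| "ar_state T c m (Suc n) =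
     (let (s, W) = ar_state T c m n;
          t = n + 1;
          Vc = (\<Sum>u\<in>{s<..t}. \<bar>m u - m (u - 1)\<bar>);
          D = real (t - s + 1)
      in if D < sqrt (real T / (W + Vc + c)) then (s, W) else (t + 1, W + Vc))"

definition ar_restart :: "nat \<Rightarrow> real \<Rightarrow> (nat \<Rightarrow> real) \<Rightarrow> nat \<Rightarrow> bool" where
  "ar_restart T c m t = (fst (ar_state T c m (t - 1)) = t)"

definition fixed_regret :: "nat \<Rightarrow> nat \<Rightarrow> (nat \<Rightarrow> real) \<Rightarrow> (nat \<Rightarrow> real) \<Rightarrow> real" where
  "fixed_regret T Delta v m = prod_regret T T (1 / real T) (1/2) (fixed_restart Delta) v m"

definition arprod_regret :: "nat \<Rightarrow> (nat \<Rightarrow> real) \<Rightarrow> (nat \<Rightarrow> real) \<Rightarrow> real" where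
  "arprod_regret T v m = prod_regret T T (1 / real T) (1/2) (ar_restart T (1 / real T) m) v m"

definition soft_bigO :: "(nat \<Rightarrow> real) \<Rightarrow> (nat \<Rightarrow> real) \<Rightarrow> bool" where
  "soft_bigO f g = (\<exists>C k. eventually (\<lambda>T. f T \<le> C * (ln (real T)) ^ k * g T) at_top)"

end

theory Submission
  imports Defs
begin

text \<open>Within a batch, Prod run on the translated rewards \<open>r t i - \<mu> t\<close> is governed by the potential
  \<open>S t = (\<Sum>i. \<Prod>s<t. 1 + \<eta> (r s i - \<mu> s))\<close>: the expected dynamic regret of round \<open>t\<close> equals
  \<open>(1 - S (t + 1) / S t) / \<eta> \<le> (ln (S t) - ln (S (t + 1))) / \<eta>\<close>, so a batch costs at most
  \<open>ln N / \<eta>\<close> plus \<open>1 / (1 - \<eta>)\<close> times the dynamic regret of any single expert. The grid expert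
  bidding just above the highest opponent bid of the batch loses at most the variation \<open>V'\<close> of
  the batch plus \<open>\<epsilon>\<close> per round, so a batch \<open>[s, b]\<close> costs \<open>O (ln T + (b - s) V')\<close>.

  Summed over the batches, \<open>ln T\<close> is paid once per batch, i.e. at most \<open>T / L + 1\<close> times when
  every completed batch has length at least \<open>L\<close>. Restarting every \<open>\<Delta>\<close> rounds, the terms
  \<open>(b - s) V' \<le> \<Delta> V'\<close> add up to \<open>\<Delta> V\<^sub>T\<close>. For AR-Prod the continuation test
  \<open>b - s < sqrt (T / (W + V' + c))\<close>, with \<open>W\<close> the variation of the earlier batches, bounds
  \<open>(b - s) V'\<close> by the increase of \<open>2 sqrt T sqrt (W + c)\<close> over the batch, which telescopes to
  \<open>2 sqrt (T (V\<^sub>T + c))\<close>, and the stopping test makes completed batches at least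
  \<open>sqrt (T / (V\<^sub>T + c))\<close> long.\<close>

lemma ln_ge_one: "3 \<le> x \<Longrightarrow> 1 \<le> ln (x :: real)"
  using exp_le by (subst ln_ge_iff) auto

lemma ln_one_plus_ge:
  fixes c y :: real
  assumes "c < 1" "-c \<le> y" "y \<le> 0"
  shows "y / (1 - c) \<le> ln (1 + y)"
proof -
  have pos: "0 < 1 + y" using assms by linarith
  have "ln (1 / (1 + y)) \<le> 1 / (1 + y) - 1"
    using pos by (intro ln_le_minus_one) simp
  moreover have "ln (1 / (1 + y)) = - ln (1 + y)" "1 / (1 + y) - 1 = - (y / (1 + y))"
    using pos by (simp_all add: ln_div field_simps)
  ultimately have "y / (1 + y) \<le> ln (1 + y)" by linarith
  moreover have "y / (1 - c) \<le> y / (1 + y)"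
    using assms pos by (intro divide_left_mono_neg mult_pos_pos) auto
  ultimately show ?thesis by linarith
qed

lemma mult_diff_le_sqrt_diff:
  fixes x y D T :: real
  assumes "0 < x" "x \<le> y" "0 \<le> T" "D \<le> sqrt (T / y)"
  shows "D * (y - x) \<le> 2 * sqrt T * (sqrt y - sqrt x)"
proof -
  have "0 < sqrt y" using assms(1,2) by simp
  have "y - x = (sqrt y - sqrt x) * (sqrt y + sqrt x)"
    using assms(1,2) by (simp add: algebra_simps)
  also have "\<dots> \<le> (sqrt y - sqrt x) * (2 * sqrt y)"
    using assms(1,2) by (intro mult_left_mono) auto
  finally have "y - x \<le> 2 * sqrt y * (sqrt y - sqrt x)" by (simp add: algebra_simps)
  have "D * (y - x) \<le> sqrt T / sqrt y * (y - x)"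
    using assms(2,4) by (intro mult_right_mono) (auto simp: real_sqrt_divide)
  also have "\<dots> \<le> sqrt T / sqrt y * (2 * sqrt y * (sqrt y - sqrt x))"
    using \<open>y - x \<le> 2 * sqrt y * (sqrt y - sqrt x)\<close> \<open>0 < sqrt y\<close> assms(3) by (intro mult_left_mono) auto
  also have "\<dots> = 2 * sqrt T * (sqrt y - sqrt x)"
    using \<open>0 < sqrt y\<close> by simp
  finally show ?thesis .
qed

lemma divide_sqrt_divide:
  fixes t x :: real
  assumes "0 \<le> t"
  shows "t / sqrt (t / x) = sqrt (t * x)"
proof -
  have "t / sqrt (t / x) = t / sqrt t * sqrt x" by (simp add: real_sqrt_divide)
  also have "\<dots> = sqrt (t * x)" using assms by (simp add: real_div_sqrt real_sqrt_mult)
  finally show ?thesis .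
qed

lemma sqrt_divide_mult:
  fixes t x :: real
  assumes "0 \<le> x"
  shows "sqrt (t / x) * x = sqrt (t * x)"
proof -
  have "sqrt (t / x) * x = sqrt t * (x / sqrt x)" by (simp add: real_sqrt_divide)
  also have "\<dots> = sqrt (t * x)" using assms by (simp add: real_div_sqrt real_sqrt_mult)
  finally show ?thesis .
qed

definition batch :: "(nat \<Rightarrow> bool) \<Rightarrow> nat \<Rightarrow> nat \<Rightarrow> bool" where
  "batch R s b \<longleftrightarrow> 1 \<le> s \<and> s \<le> b \<and> R s \<and> (\<forall>t\<in>{s<..b}. \<not> R t)"

lemma batch_prefix: "batch R s b \<Longrightarrow> s \<le> b' \<Longrightarrow> b' \<le> b \<Longrightarrow> batch R s b'"
  unfolding batch_def by auto

section \<open>The Prod forecaster within a batch\<close>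

lemma expert_reward_nonneg: "0 \<le> expert_reward eps v m t i"
  and expert_reward_le_mu: "expert_reward eps v m t i \<le> mu v m t"
  unfolding expert_reward_def reward_def mu_def by auto

lemma mu_le_one: "v t \<le> 1 \<Longrightarrow> 0 \<le> m t \<Longrightarrow> mu v m t \<le> 1"
  unfolding mu_def by auto

definition prod_weight :: "real \<Rightarrow> real \<Rightarrow> (nat \<Rightarrow> real) \<Rightarrow> (nat \<Rightarrow> real) \<Rightarrow> nat \<Rightarrow> nat \<Rightarrow> nat \<Rightarrow> real" where
  "prod_weight eps eta v m a t i =
     (\<Prod>s\<in>{a..<t}. 1 + eta * (expert_reward eps v m s i - mu v m s))"

definition prod_potential :: "nat \<Rightarrow> real \<Rightarrow> real \<Rightarrow> (nat \<Rightarrow> real) \<Rightarrow> (nat \<Rightarrow> real) \<Rightarrow> nat \<Rightarrow> nat \<Rightarrow> real" where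
  "prod_potential N eps eta v m a t = (\<Sum>i\<in>{1..N}. prod_weight eps eta v m a t i)"

lemma prod_factor_ge:
  assumes "0 \<le> eta" "mu v m s \<le> 1"
  shows "1 - eta \<le> 1 + eta * (expert_reward eps v m s i - mu v m s)"
proof -
  have "-1 \<le> expert_reward eps v m s i - mu v m s"
    using expert_reward_nonneg[of eps v m s i] assms(2) by linarith
  from mult_left_mono[OF this assms(1)] show ?thesis by simp
qed

lemma prod_weight_pos:
  assumes "0 \<le> eta" "eta < 1" "\<And>s. s \<in> {a..<t} \<Longrightarrow> mu v m s \<le> 1"
  shows "0 < prod_weight eps eta v m a t i"
  unfolding prod_weight_def
proof (rule prod_pos)
  fix s assume "s \<in> {a..<t}"
  then have "1 - eta \<le> 1 + eta * (expert_reward eps v m s i - mu v m s)"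
    using prod_factor_ge assms(1,3) by blast
  then show "0 < 1 + eta * (expert_reward eps v m s i - mu v m s)" using assms(2) by linarith
qed

lemma prod_potential_pos:
  assumes "N \<ge> 1" "0 \<le> eta" "eta < 1" "\<And>s. s \<in> {a..<t} \<Longrightarrow> mu v m s \<le> 1"
  shows "0 < prod_potential N eps eta v m a t"
  unfolding prod_potential_def
  using assms by (intro sum_pos prod_weight_pos) auto

lemma prod_weight_Suc:
  "a \<le> t \<Longrightarrow> prod_weight eps eta v m a (Suc t) i
     = prod_weight eps eta v m a t i * (1 + eta * (expert_reward eps v m t i - mu v m t))"
  unfolding prod_weight_def by (simp add: prod.atLeastLessThan_Suc)

lemma prod_potential_start: "prod_potential N eps eta v m a a = real N"
  unfolding prod_potential_def prod_weight_def by simp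

lemma prod_w_eq_weight:
  assumes "batch R a t" "N \<ge> 1" "0 \<le> eta" "eta < 1"
    and "\<And>s. s \<in> {a..<t} \<Longrightarrow> mu v m s \<le> 1"
  shows "prod_w N eps eta R v m (t - 1) i
           = prod_weight eps eta v m a t i / prod_potential N eps eta v m a t"
proof -
  have "a \<le> t" using assms(1) by (simp add: batch_def)
  then show ?thesis using assms(1,5)
  proof (induction t arbitrary: i rule: nat_induct_at_least)
    case base
    then have "1 \<le> a" "R a" unfolding batch_def by auto
    moreover obtain n where "a = Suc n" using \<open>1 \<le> a\<close> by (cases a) auto
    ultimately have "prod_w N eps eta R v m (a - 1) i = 1 / real N"
      by (cases n) auto
    then show ?case by (simp add: prod_potential_start prod_weight_def)
  next
    case (Suc t)
    let ?W = "prod_weight eps eta v m a" and ?S = "prod_potential N eps eta v m a"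
    define f where "f k = (1 + eta * (expert_reward eps v m t k - mu v m t))
                          * prod_w N eps eta R v m (t - 1) k" for k
    have "batch R a t" using Suc.prems(1) Suc.hyps by (rule batch_prefix) auto
    then have IH: "prod_w N eps eta R v m (t - 1) k = ?W t k / ?S t" for k
      using Suc.IH Suc.prems(2) by auto
    have "0 < ?S t" using prod_potential_pos assms(2-4) Suc.prems(2) by auto
    have "1 \<le> a" "\<not> R (Suc t)" using Suc.prems(1) Suc.hyps by (auto simp: batch_def)
    then obtain n where "t = Suc n" using Suc.hyps by (cases t) auto
    with \<open>\<not> R (Suc t)\<close> have "prod_w N eps eta R v m (Suc t - 1) i = f i / sum f {1..N}"
      by (simp add: f_def Let_def)
    moreover have f: "f k = ?W (Suc t) k / ?S t" for k
      unfolding f_def IH prod_weight_Suc[OF Suc.hyps] by simp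
    moreover have "sum f {1..N} = ?S (Suc t) / ?S t"
      unfolding f prod_potential_def[of N eps eta v m a "Suc t"] by (simp add: sum_divide_distrib)
    ultimately show ?case using \<open>0 < ?S t\<close> by simp
  qed
qed

lemma prod_potential_Suc:
  assumes "batch R a t" "N \<ge> 1" "0 \<le> eta" "eta < 1"
    and "\<And>s. s \<in> {a..<t} \<Longrightarrow> mu v m s \<le> 1"
  shows "prod_potential N eps eta v m a (Suc t)
           = prod_potential N eps eta v m a t * (1 + eta * (prod_exp_reward N eps eta R v m t - mu v m t))"
proof -
  let ?W = "prod_weight eps eta v m a t" and ?S = "prod_potential N eps eta v m a t"
  let ?r = "\<lambda>k. expert_reward eps v m t k"
  have "a \<le> t" using assms(1) by (simp add: batch_def)
  have "0 < ?S" using prod_potential_pos assms(2-5) by blast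
  have "prod_w N eps eta R v m (t - 1) k = ?W k / ?S" for k
    using prod_w_eq_weight[OF assms] .
  then have "prod_exp_reward N eps eta R v m t = (\<Sum>k\<in>{1..N}. ?W k * ?r k) / ?S"
    unfolding prod_exp_reward_def by (simp add: sum_divide_distrib)
  moreover have "prod_potential N eps eta v m a (Suc t)
      = ?S + eta * (\<Sum>k\<in>{1..N}. ?W k * ?r k) - eta * mu v m t * ?S"
    unfolding prod_potential_def prod_weight_Suc[OF \<open>a \<le> t\<close>]
    by (simp add: algebra_simps sum.distrib sum_subtractf sum_distrib_left)
  ultimately show ?thesis using \<open>0 < ?S\<close> by (simp add: field_simps)
qed

lemma prod_round_regret_le:
  assumes "batch R a t" "N \<ge> 1" "0 < eta" "eta < 1"
    and "\<And>s. s \<in> {a..t} \<Longrightarrow> mu v m s \<le> 1"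
  shows "mu v m t - prod_exp_reward N eps eta R v m t
           \<le> (ln (prod_potential N eps eta v m a t) - ln (prod_potential N eps eta v m a (Suc t))) / eta"
proof -
  let ?S = "prod_potential N eps eta v m a"
  have pos: "0 < ?S t" "0 < ?S (Suc t)"
    using prod_potential_pos[of N eta a _ v m eps] assms(2-5) by auto
  have "?S (Suc t) / ?S t = 1 - eta * (mu v m t - prod_exp_reward N eps eta R v m t)"
    using prod_potential_Suc[OF assms(1-2)] assms(3-5) pos by (auto simp: field_simps)
  moreover have "ln (?S (Suc t) / ?S t) \<le> ?S (Suc t) / ?S t - 1"
    using pos by (intro ln_le_minus_one) simp
  moreover have "ln (?S (Suc t) / ?S t) = ln (?S (Suc t)) - ln (?S t)"
    using pos by (simp add: ln_div)
  ultimately have "eta * (mu v m t - prod_exp_reward N eps eta R v m t) \<le> ln (?S t) - ln (?S (Suc t))"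
    by linarith
  then show ?thesis
    using assms(3) by (simp add: field_simps)
qed

lemma prod_batch_regret_le_potential:
  assumes "batch R a b" "N \<ge> 1" "0 < eta" "eta < 1" "\<And>s. s \<in> {a..b} \<Longrightarrow> mu v m s \<le> 1"
  shows "(\<Sum>t\<in>{a..b}. mu v m t - prod_exp_reward N eps eta R v m t)
           \<le> (ln (real N) - ln (prod_potential N eps eta v m a (Suc b))) / eta"
proof -
  let ?S = "prod_potential N eps eta v m a"
  have "(\<Sum>t\<in>{a..b}. mu v m t - prod_exp_reward N eps eta R v m t)
        \<le> (\<Sum>t\<in>{a..b}. (ln (?S t) - ln (?S (Suc t))) / eta)"
  proof (rule sum_mono)
    fix t assume t: "t \<in> {a..b}"
    have "batch R a t" using assms(1) by (rule batch_prefix) (use t in auto)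
    moreover have "\<And>s. s \<in> {a..t} \<Longrightarrow> mu v m s \<le> 1" using assms(5) t by auto
    ultimately show "mu v m t - prod_exp_reward N eps eta R v m t \<le> (ln (?S t) - ln (?S (Suc t))) / eta"
      using prod_round_regret_le assms(2-4) by blast
  qed
  also have "\<dots> = (ln (?S a) - ln (?S (Suc b))) / eta"
    using sum_Suc_diff[of a b "\<lambda>t. - ln (?S t)"] assms(1)
    by (simp add: batch_def sum_divide_distrib[symmetric])
  finally show ?thesis by (simp add: prod_potential_start)
qed

lemma ln_prod_weight_ge:
  assumes "0 < eta" "eta < 1" "\<And>s. s \<in> {a..b} \<Longrightarrow> mu v m s \<le> 1"
  shows "eta * (\<Sum>t\<in>{a..b}. expert_reward eps v m t i - mu v m t) / (1 - eta)
           \<le> ln (prod_weight eps eta v m a (Suc b) i)"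
proof -
  let ?x = "\<lambda>t. expert_reward eps v m t i - mu v m t"
  have factor_ge: "- eta \<le> eta * ?x t" if "t \<in> {a..b}" for t
    using prod_factor_ge[of eta v m t eps i] assms(1,3) that by simp
  have "eta * (\<Sum>t\<in>{a..b}. ?x t) / (1 - eta) = (\<Sum>t\<in>{a..b}. eta * ?x t / (1 - eta))"
    by (simp add: sum_distrib_left sum_divide_distrib)
  also have "\<dots> \<le> (\<Sum>t\<in>{a..b}. ln (1 + eta * ?x t))"
  proof (intro sum_mono ln_one_plus_ge)
    fix t assume "t \<in> {a..b}"
    have "?x t \<le> 0" using expert_reward_le_mu[of eps v m t i] by simp
    then show "eta * ?x t \<le> 0" using assms(1) by (simp add: mult_nonneg_nonpos)
  qed (use assms(2) factor_ge in auto)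
  also have "\<dots> = ln (prod_weight eps eta v m a (Suc b) i)"
    unfolding prod_weight_def atLeastLessThanSuc_atLeastAtMost
    using factor_ge assms(2) by (intro ln_prod[symmetric]) force+
  finally show ?thesis .
qed

lemma prod_batch_regret_le:
  assumes "batch R a b" "N \<ge> 1" "0 < eta" "eta < 1"
    and "\<And>s. s \<in> {a..b} \<Longrightarrow> mu v m s \<le> 1" "i \<in> {1..N}"
  shows "(\<Sum>t\<in>{a..b}. mu v m t - prod_exp_reward N eps eta R v m t)
           \<le> ln (real N) / eta + (\<Sum>t\<in>{a..b}. mu v m t - expert_reward eps v m t i) / (1 - eta)"
proof -
  let ?S = "prod_potential N eps eta v m a (Suc b)" and ?W = "prod_weight eps eta v m a (Suc b)"
  have W_pos: "0 < ?W k" for k using prod_weight_pos assms(3-5) by force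
  then have "?W i \<le> ?S"
    unfolding prod_potential_def using assms(6) by (intro member_le_sum) (auto intro: less_imp_le)
  then have ln_S: "eta * (\<Sum>t\<in>{a..b}. expert_reward eps v m t i - mu v m t) / (1 - eta) \<le> ln ?S"
    using ln_prod_weight_ge[of eta a b v m eps i] ln_mono[OF _ W_pos] assms(3-5) by fastforce
  have "(\<Sum>t\<in>{a..b}. mu v m t - prod_exp_reward N eps eta R v m t) \<le> (ln (real N) - ln ?S) / eta"
    by (rule prod_batch_regret_le_potential) (use assms in auto)
  also have "\<dots> \<le> (ln (real N) - eta * (\<Sum>t\<in>{a..b}. expert_reward eps v m t i - mu v m t) / (1 - eta)) / eta"
    using ln_S assms(3) by (intro divide_right_mono) auto
  also have "\<dots> = ln (real N) / eta - (\<Sum>t\<in>{a..b}. expert_reward eps v m t i - mu v m t) / (1 - eta)"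
    using assms(3) by (simp add: diff_divide_distrib)
  also have "\<dots> = ln (real N) / eta + (\<Sum>t\<in>{a..b}. mu v m t - expert_reward eps v m t i) / (1 - eta)"
    by (simp add: sum_subtractf minus_divide_left)
  finally show ?thesis .
qed

section \<open>Temporal variation and a near-optimal expert\<close>

definition variation :: "(nat \<Rightarrow> real) \<Rightarrow> nat \<Rightarrow> nat \<Rightarrow> real" where
  "variation m a b = (\<Sum>u\<in>{a<..b}. \<bar>m u - m (u - 1)\<bar>)"

lemma variation_nonneg: "0 \<le> variation m a b"
  unfolding variation_def by (rule sum_nonneg) simp

lemma variation_mono: "a \<le> a' \<Longrightarrow> b' \<le> b \<Longrightarrow> variation m a' b' \<le> variation m a b"
  unfolding variation_def by (rule sum_mono2) auto

lemma variation_add_le: "a \<le> s \<Longrightarrow> s \<le> Suc b \<Longrightarrow> variation m a (s - 1) + variation m s b \<le> variation m a b"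
proof -
  assume "a \<le> s" "s \<le> Suc b"
  have "variation m a (s - 1) + variation m s b = (\<Sum>u\<in>{a<..s - 1} \<union> {s<..b}. \<bar>m u - m (u - 1)\<bar>)"
    unfolding variation_def by (rule sum.union_disjoint[symmetric]) auto
  also have "\<dots> \<le> variation m a b"
    unfolding variation_def using \<open>a \<le> s\<close> \<open>s \<le> Suc b\<close> by (intro sum_mono2) auto
  finally show ?thesis .
qed

lemma variation_Suc: "a \<le> b \<Longrightarrow> variation m a (Suc b) = variation m a b + \<bar>m (Suc b) - m b\<bar>"
proof -
  assume "a \<le> b"
  then have "{a<..Suc b} = insert (Suc b) {a<..b}" by auto
  then show ?thesis unfolding variation_def by (simp add: add.commute)
qed

lemma abs_diff_le_variation: "t \<le> u \<Longrightarrow> \<bar>m u - m t\<bar> \<le> variation m t u"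
proof (induction u rule: dec_induct)
  case base
  then show ?case by (simp add: variation_def)
next
  case (step u)
  have "\<bar>m (Suc u) - m t\<bar> \<le> \<bar>m u - m t\<bar> + \<bar>m (Suc u) - m u\<bar>" by linarith
  with step show ?case by (simp add: variation_Suc)
qed

lemma abs_diff_le_variation_within:
  assumes "t \<in> {a..b}" "u \<in> {a..b}"
  shows "\<bar>m u - m t\<bar> \<le> variation m a b"
proof (cases "t \<le> u")
  case True
  then have "\<bar>m u - m t\<bar> \<le> variation m t u" by (rule abs_diff_le_variation)
  also have "\<dots> \<le> variation m a b" using assms by (intro variation_mono) auto
  finally show ?thesis .
next
  case False
  then have "\<bar>m t - m u\<bar> \<le> variation m u t" by (intro abs_diff_le_variation) simp
  also have "\<dots> \<le> variation m a b" using assms by (intro variation_mono) auto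
  finally show ?thesis by linarith
qed

lemma reward_gap_le:
  assumes "mt \<le> M" "M \<le> x" "x \<le> M + d"
  shows "max (vt - mt) 0 - reward (min vt x) vt mt \<le> M - mt + d"
  using assms unfolding reward_def by auto

lemma exists_grid_point_above:
  fixes M eps :: real
  assumes "0 < eps" "1 \<le> real N * eps" "0 \<le> M" "M \<le> 1"
  shows "\<exists>i\<in>{1..N}. M \<le> real i * eps \<and> real i * eps \<le> M + eps"
proof -
  define i where "i = max 1 (nat \<lceil>M / eps\<rceil>)"
  have "M / eps \<le> real i"
    using real_nat_ceiling_ge[of "M / eps"] unfolding i_def by (simp add: of_nat_max)
  moreover have "real i \<le> M / eps + 1"
  proof -
    have "real (nat \<lceil>M / eps\<rceil>) = of_int \<lceil>M / eps\<rceil>" using assms(1,3) by simp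
    also have "\<dots> \<le> M / eps + 1" by (rule of_int_ceiling_le_add_one)
    finally show ?thesis using assms(1,3) unfolding i_def by (simp add: of_nat_max)
  qed
  moreover have "i \<in> {1..N}"
  proof -
    have "M / eps \<le> real N" using assms by (simp add: field_simps)
    then have "nat \<lceil>M / eps\<rceil> \<le> N" by (simp add: nat_le_iff ceiling_le_iff)
    then show ?thesis using assms(1,2) unfolding i_def by (cases N) auto
  qed
  ultimately show ?thesis using assms(1) by (auto simp: field_simps)
qed

lemma exists_expert_near_max:
  assumes "0 < eps" "1 \<le> real N * eps"
    and m01: "\<And>t. t \<in> {s..e} \<Longrightarrow> 0 \<le> m t \<and> m t \<le> 1"
  shows "\<exists>i\<in>{1..N}. \<forall>t\<in>{s..e}. mu v m t - expert_reward eps v m t i \<le> variation m s e + eps"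
proof (cases "s \<le> e")
  case False
  have "N \<ge> 1" using assms(1,2) by (cases N) auto
  with False show ?thesis by auto
next
  case True
  define M where "M = Max (m ` {s..e})"
  have "M \<in> m ` {s..e}" unfolding M_def using True by (intro Max_in) auto
  then obtain u where u: "u \<in> {s..e}" "M = m u" by auto
  have M_ge: "m t \<le> M" if "t \<in> {s..e}" for t
    unfolding M_def using that by (intro Max_ge) auto
  obtain i where "i \<in> {1..N}" "M \<le> real i * eps" "real i * eps \<le> M + eps"
    using exists_grid_point_above[OF assms(1,2)] m01[OF u(1)] u(2) by blast
  moreover have "M - m t \<le> variation m s e" if "t \<in> {s..e}" for t
    using abs_diff_le_variation_within[OF that u(1), of m] u(2) by linarith
  ultimately show ?thesis
    unfolding mu_def expert_reward_def
    by (intro bexI[of _ i] ballI order.trans[OF reward_gap_le]) (auto simp: M_ge)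
qed

section \<open>Summing over batches\<close>

lemma batch_restarts: "batch R s b \<Longrightarrow> {t\<in>{s..b}. R t} = {s}"
  unfolding batch_def by (auto simp: le_less)

lemma batch_interval_split: "batch R s b \<Longrightarrow> {1..b} = {1..s - 1} \<union> {s..b}"
  unfolding batch_def by auto

lemma obtain_batch_ending_at:
  assumes "R 1" "1 \<le> b"
  obtains s where "batch R s b"
proof -
  let ?A = "{t\<in>{1..b}. R t}"
  define s where "s = Max ?A"
  have "s \<in> ?A" unfolding s_def using assms by (intro Max_in) auto
  moreover have "\<not> R t" if "t \<in> {s<..b}" for t
  proof
    assume "R t"
    with that have "t \<in> ?A" using \<open>s \<in> ?A\<close> by auto
    then have "t \<le> s" unfolding s_def by (intro Max_ge) auto
    with that show False by simp
  qed
  ultimately have "batch R s b" unfolding batch_def by auto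
  then show ?thesis by (rule that)
qed

lemma batch_induct:
  assumes "R 1" "P 0" "\<And>s b. batch R s b \<Longrightarrow> P (s - 1) \<Longrightarrow> P b"
  shows "P b"
proof (induction b rule: less_induct)
  case (less b)
  show ?case
  proof (cases "b = 0")
    case True
    with assms(2) show ?thesis by simp
  next
    case False
    then have "1 \<le> b" by simp
    then obtain s where s: "batch R s b" by (rule obtain_batch_ending_at[of R, OF assms(1)])
    then have "s - 1 < b" by (auto simp: batch_def)
    with s less.IH show ?thesis by (blast intro: assms(3))
  qed
qed

definition restart_count :: "(nat \<Rightarrow> bool) \<Rightarrow> nat \<Rightarrow> nat" where
  "restart_count R b = card {t\<in>{1..b}. R t}"

lemma restart_count_batch: "batch R s b \<Longrightarrow> restart_count R b = Suc (restart_count R (s - 1))"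
proof -
  assume "batch R s b"
  then have "{t\<in>{1..b}. R t} = {t\<in>{1..s - 1}. R t} \<union> {t\<in>{s..b}. R t}"
    by (subst batch_interval_split) auto
  then have "{t\<in>{1..b}. R t} = insert s {t\<in>{1..s - 1}. R t}"
    using batch_restarts[OF \<open>batch R s b\<close>] by auto
  moreover have "s \<notin> {t\<in>{1..s - 1}. R t}" by auto
  ultimately show ?thesis unfolding restart_count_def by simp
qed

lemma sum_split_at_batch:
  fixes d :: "nat \<Rightarrow> real"
  assumes "batch R s b"
  shows "(\<Sum>t\<in>{1..b}. d t) = (\<Sum>t\<in>{1..s - 1}. d t) + (\<Sum>t\<in>{s..b}. d t)"
  unfolding batch_interval_split[OF assms] by (simp add: sum.union_disjoint)

lemma sum_le_by_batches:
  fixes d Q :: "nat \<Rightarrow> real"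
  assumes "R 1" "b \<le> T"
    and "\<And>s b. batch R s b \<Longrightarrow> b \<le> T \<Longrightarrow> (\<Sum>t\<in>{s..b}. d t) \<le> K + Q b - Q (s - 1)"
  shows "(\<Sum>t\<in>{1..b}. d t) \<le> Q b - Q 0 + K * real (restart_count R b)"
  using assms(2)
proof (induction b rule: batch_induct[of R, OF assms(1)])
  case 1
  show ?case by (simp add: restart_count_def)
next
  case (2 s b)
  have "s - 1 \<le> T" using 2(1,3) by (auto simp: batch_def)
  with 2(2) have "(\<Sum>t\<in>{1..s - 1}. d t) \<le> Q (s - 1) - Q 0 + K * real (restart_count R (s - 1))"
    by blast
  moreover have "real (restart_count R b) = real (restart_count R (s - 1)) + 1"
    using restart_count_batch[OF 2(1)] by simp
  ultimately show ?case
    using assms(3)[OF 2(1,3)] sum_split_at_batch[OF 2(1), of d] by (simp add: distrib_left)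
qed

lemma restart_count_le:
  assumes "R 1" "1 \<le> T" "0 < L"
    and long: "\<And>s b. batch R s b \<Longrightarrow> b < T \<Longrightarrow> R (Suc b) \<Longrightarrow> L \<le> real (b - s + 1)"
  shows "real (restart_count R T) \<le> real T / L + 1"
proof -
  have complete: "b < T \<longrightarrow> (b = 0 \<or> R (Suc b)) \<longrightarrow> L * restart_count R b \<le> b" for b
  proof (induction b rule: batch_induct[of R, OF assms(1)])
    case 1
    show ?case by (simp add: restart_count_def)
  next
    case (2 s b)
    show ?case
    proof (intro impI)
      assume "b < T" "b = 0 \<or> R (Suc b)"
      with 2(1) have "L \<le> real (b - s + 1)" "s - 1 < T" "s - 1 = 0 \<or> R (Suc (s - 1))"
        using long by (auto simp: batch_def)
      with 2(2) have "L * restart_count R (s - 1) \<le> real (s - 1)" by blast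
      moreover have "L * restart_count R b = L * restart_count R (s - 1) + L"
        using restart_count_batch[OF 2(1)] by (simp add: distrib_left)
      moreover have "real (s - 1) + real (b - s + 1) = real b" using 2(1) by (auto simp: batch_def)
      ultimately show "L * restart_count R b \<le> b" using \<open>L \<le> real (b - s + 1)\<close> by linarith
    qed
  qed
  obtain s where s: "batch R s T" using obtain_batch_ending_at assms(1,2) by blast
  then have "s - 1 = 0 \<or> R (Suc (s - 1))" "s - 1 < T" by (auto simp: batch_def)
  then have "L * restart_count R (s - 1) \<le> real (s - 1)" using complete by blast
  also have "\<dots> \<le> T" using \<open>s - 1 < T\<close> by simp
  finally have "real (restart_count R (s - 1)) \<le> real T / L"
    using assms(3) by (simp add: pos_le_divide_eq mult.commute)
  moreover have "real (restart_count R T) = real (restart_count R (s - 1)) + 1"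
    using restart_count_batch[OF s] by simp
  ultimately show ?thesis by linarith
qed

lemma exists_expert_batch_regret_le:
  assumes "1 \<le> s" "s \<le> b" "b \<le> T"
    and bounded: "\<And>t. t \<in> {1..T} \<Longrightarrow> 0 \<le> v t \<and> v t \<le> 1 \<and> 0 \<le> m t \<and> m t \<le> 1"
  shows "\<exists>i\<in>{1..T}. (\<Sum>t\<in>{s..b}. mu v m t - expert_reward (1 / real T) v m t i)
                     \<le> 1 + real (b - s) * (variation m s (b - 1) + 1 / real T)"
proof -
  have "0 < 1 / real T" "1 \<le> real T * (1 / real T)" using assms(1-3) by simp_all
  moreover have "0 \<le> m t \<and> m t \<le> 1" if "t \<in> {s..b - 1}" for t
    using bounded[of t] that assms(1,3) by auto
  ultimately obtain i where i: "i \<in> {1..T}"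
    and close: "\<forall>t\<in>{s..b - 1}. mu v m t - expert_reward (1 / real T) v m t i
                                  \<le> variation m s (b - 1) + 1 / real T"
    using exists_expert_near_max by blast
  have "{s..b} = insert b {s..b - 1}" "b \<notin> {s..b - 1}" using assms(1,2) by auto
  then have "(\<Sum>t\<in>{s..b}. mu v m t - expert_reward (1 / real T) v m t i)
      = (mu v m b - expert_reward (1 / real T) v m b i)
        + (\<Sum>t\<in>{s..b - 1}. mu v m t - expert_reward (1 / real T) v m t i)"
    by simp
  also have "\<dots> \<le> 1 + real (card {s..b - 1}) * (variation m s (b - 1) + 1 / real T)"
  proof (rule add_mono)
    show "mu v m b - expert_reward (1 / real T) v m b i \<le> 1"
      using mu_le_one[of v b m] bounded[of b] expert_reward_nonneg[of "1 / real T" v m b i] assms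
      by simp
  qed (use close in \<open>intro sum_bounded_above, auto\<close>)
  also have "real (card {s..b - 1}) = real (b - s)" using assms(1,2) by (simp add: Suc_diff_le)
  finally show ?thesis using i by blast
qed

lemma batch_regret_le:
  assumes "batch R s b" "b \<le> T"
    and bounded: "\<And>t. t \<in> {1..T} \<Longrightarrow> 0 \<le> v t \<and> v t \<le> 1 \<and> 0 \<le> m t \<and> m t \<le> 1"
  shows "(\<Sum>t\<in>{s..b}. mu v m t - prod_exp_reward T (1 / real T) (1/2) R v m t)
           \<le> 2 * ln (real T) + 2 + 2 * real (b - s) * (variation m s (b - 1) + 1 / real T)"
proof -
  have "1 \<le> s" "s \<le> b" using assms(1) by (auto simp: batch_def)
  then obtain i where i: "i \<in> {1..T}" and "(\<Sum>t\<in>{s..b}. mu v m t - expert_reward (1 / real T) v m t i)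
                     \<le> 1 + real (b - s) * (variation m s (b - 1) + 1 / real T)"
    using exists_expert_batch_regret_le[where v = v and m = m, OF _ _ assms(2) bounded] by blast
  moreover have "(\<Sum>t\<in>{s..b}. mu v m t - prod_exp_reward T (1 / real T) (1/2) R v m t)
      \<le> ln (real T) / (1/2) + (\<Sum>t\<in>{s..b}. mu v m t - expert_reward (1 / real T) v m t i) / (1 - 1/2)"
    using assms(1,2) i bounded \<open>1 \<le> s\<close> by (intro prod_batch_regret_le mu_le_one) auto
  ultimately show ?thesis by simp
qed

lemma prod_regret_le:
  fixes Q :: "nat \<Rightarrow> real"
  assumes "R 1" "1 \<le> T" "0 < L"
    and bounded: "\<And>t. t \<in> {1..T} \<Longrightarrow> 0 \<le> v t \<and> v t \<le> 1 \<and> 0 \<le> m t \<and> m t \<le> 1"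
    and long: "\<And>s b. batch R s b \<Longrightarrow> b < T \<Longrightarrow> R (Suc b) \<Longrightarrow> L \<le> real (b - s + 1)"
    and drift: "\<And>s b. batch R s b \<Longrightarrow> b \<le> T
                  \<Longrightarrow> 2 * real (b - s) * variation m s (b - 1) \<le> Q b - Q (s - 1)"
  shows "prod_regret T T (1 / real T) (1/2) R v m
           \<le> Q T - Q 0 + (2 * ln (real T) + 2) * (real T / L + 1) + 2"
proof -
  define K where "K = 2 * ln (real T) + 2"
  define Q' where "Q' b = Q b + 2 * real b / real T" for b
  have "prod_regret T T (1 / real T) (1/2) R v m \<le> Q' T - Q' 0 + K * real (restart_count R T)"
    unfolding prod_regret_def
  proof (rule sum_le_by_batches[where R = R, OF assms(1) order.refl])
    fix s b assume sb: "batch R s b" "b \<le> T"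
    then have "real (b - s) \<le> real b - real (s - 1)" by (auto simp: batch_def)
    then have "2 * real (b - s) * (1 / real T) \<le> 2 * real b / real T - 2 * real (s - 1) / real T"
      using assms(2) by (simp add: field_simps)
    with batch_regret_le[where v = v and m = m, OF sb bounded] drift[OF sb]
    show "(\<Sum>t\<in>{s..b}. mu v m t - prod_exp_reward T (1 / real T) (1/2) R v m t) \<le> K + Q' b - Q' (s - 1)"
      unfolding K_def Q'_def by (simp add: distrib_left)
  qed
  also have "\<dots> \<le> Q T - Q 0 + 2 + K * (real T / L + 1)"
  proof -
    have "0 \<le> K" unfolding K_def using assms(2) by simp
    then have "K * real (restart_count R T) \<le> K * (real T / L + 1)"
      using restart_count_le[of R, OF assms(1-3) long] by (intro mult_left_mono)
    then show ?thesis unfolding Q'_def using assms(2) by simp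
  qed
  finally show ?thesis unfolding K_def by simp
qed

lemma seqs_bounded: "(v, m) \<in> seqs T V \<Longrightarrow> t \<in> {1..T} \<Longrightarrow> 0 \<le> v t \<and> v t \<le> 1 \<and> 0 \<le> m t \<and> m t \<le> 1"
  unfolding seqs_def by auto

lemma seqs_variation_le: "(v, m) \<in> seqs T V \<Longrightarrow> variation m 1 T \<le> V"
proof -
  assume "(v, m) \<in> seqs T V"
  moreover have "{1<..T} = {2..T}" by auto
  ultimately show ?thesis unfolding seqs_def variation_def by auto
qed

section \<open>Restarts every Delta rounds\<close>

lemma fixed_restart_batch_length:
  assumes "1 \<le> Delta" "batch (fixed_restart Delta) s b"
  shows "b - s < Delta"
    and "fixed_restart Delta (Suc b) \<Longrightarrow> Delta \<le> b - s + 1"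
proof -
  have "1 \<le> s" "s \<le> b" "Delta dvd (s - 1)"
    and no_restart: "\<And>t. t \<in> {s<..b} \<Longrightarrow> \<not> fixed_restart Delta t"
    using assms(2) unfolding batch_def fixed_restart_def by auto
  show "b - s < Delta"
  proof (rule ccontr)
    assume "\<not> b - s < Delta"
    then have "s + Delta \<in> {s<..b}" using assms(1) by auto
    moreover have "s + Delta - 1 = (s - 1) + Delta" using \<open>1 \<le> s\<close> by simp
    then have "fixed_restart Delta (s + Delta)"
      using \<open>Delta dvd (s - 1)\<close> unfolding fixed_restart_def by (simp add: dvd_eq_mod_eq_0)
    ultimately show False using no_restart by blast
  qed
  assume "fixed_restart Delta (Suc b)"
  then have "Delta dvd b - (s - 1)"
    using \<open>Delta dvd (s - 1)\<close> unfolding fixed_restart_def by (auto intro: dvd_diff_nat)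
  moreover have "0 < b - (s - 1)" using \<open>1 \<le> s\<close> \<open>s \<le> b\<close> by simp
  ultimately have "Delta \<le> b - (s - 1)" by (rule dvd_imp_le)
  then show "Delta \<le> b - s + 1" using \<open>1 \<le> s\<close> \<open>s \<le> b\<close> by simp
qed

lemma fixed_regret_le:
  assumes "1 \<le> T" "1 \<le> Delta" "(v, m) \<in> seqs T V"
  shows "fixed_regret T Delta v m
           \<le> 2 * real Delta * V + (2 * ln (real T) + 2) * (real T / real Delta + 1) + 2"
proof -
  define Q where "Q b = 2 * real Delta * variation m 1 b" for b
  have "fixed_regret T Delta v m \<le> Q T - Q 0 + (2 * ln (real T) + 2) * (real T / real Delta + 1) + 2"
    unfolding fixed_regret_def
  proof (rule prod_regret_le)
    show "fixed_restart Delta 1" by (simp add: fixed_restart_def)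
    show "0 < real Delta" using assms(2) by simp
  next
    fix s b assume "batch (fixed_restart Delta) s b" "b < T" "fixed_restart Delta (Suc b)"
    then have "Delta \<le> b - s + 1" using fixed_restart_batch_length(2)[OF assms(2)] by blast
    then show "real Delta \<le> real (b - s + 1)" by linarith
  next
    fix s b assume sb: "batch (fixed_restart Delta) s b"
    then have "1 \<le> s" "s \<le> b" by (auto simp: batch_def)
    have "real (b - s) * variation m s (b - 1) \<le> real Delta * variation m s b"
      using fixed_restart_batch_length(1)[OF assms(2) sb]
      by (intro mult_mono variation_mono) (auto simp: variation_nonneg)
    also have "\<dots> \<le> real Delta * (variation m 1 b - variation m 1 (s - 1))"
      using variation_add_le[of 1 s b m] \<open>1 \<le> s\<close> \<open>s \<le> b\<close> by (intro mult_left_mono) auto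
    finally show "2 * real (b - s) * variation m s (b - 1) \<le> Q b - Q (s - 1)"
      unfolding Q_def by (simp add: algebra_simps)
  qed (use assms seqs_bounded in auto)
  moreover have "Q T - Q 0 \<le> 2 * real Delta * V"
    using seqs_variation_le[OF assms(3)] unfolding Q_def by (simp add: variation_def mult_left_mono)
  ultimately show ?thesis by linarith
qed

section \<open>AR-Prod\<close>

lemma ar_state_Suc:
  assumes "ar_state T c m n = (s, W)"
  shows "ar_state T c m (Suc n) =
    (if real (n + 1 - s + 1) < sqrt (real T / (W + variation m s (Suc n) + c)) then (s, W)
     else (n + 2, W + variation m s (Suc n)))"
  using assms by (simp add: variation_def Let_def)

lemma ar_state_bounds:
  "1 \<le> fst (ar_state T c m n) \<and> fst (ar_state T c m n) \<le> Suc n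
   \<and> 0 \<le> snd (ar_state T c m n) \<and> snd (ar_state T c m n) \<le> variation m 1 (fst (ar_state T c m n) - 1)"
proof (induction n)
  case 0
  show ?case by (simp add: variation_def)
next
  case (Suc n)
  obtain s W where sW: "ar_state T c m n = (s, W)" by fastforce
  with Suc.IH have "1 \<le> s" "s \<le> Suc n" "0 \<le> W" "W \<le> variation m 1 (s - 1)" by auto
  moreover have "variation m 1 (s - 1) + variation m s (Suc n) \<le> variation m 1 (Suc n)"
    using calculation by (intro variation_add_le) auto
  ultimately show ?case
    using variation_nonneg[of m s "Suc n"] unfolding ar_state_Suc[OF sW] by auto
qed

text \<open>\<open>ar_variation T c m n\<close> is the sum \<open>\<Sum>i\<le>j. V\<^sub>T\<^sub>,\<^sub>i\<close> of the continuation test as known after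
  round \<open>n\<close>; jumps of \<open>m\<close> across batch boundaries are not counted.\<close>

definition ar_variation :: "nat \<Rightarrow> real \<Rightarrow> (nat \<Rightarrow> real) \<Rightarrow> nat \<Rightarrow> real" where
  "ar_variation T c m n = snd (ar_state T c m n) + variation m (fst (ar_state T c m n)) n"

lemma ar_variation_Suc:
  "ar_variation T c m (Suc n) = snd (ar_state T c m n) + variation m (fst (ar_state T c m n)) (Suc n)"
proof -
  obtain s W where sW: "ar_state T c m n = (s, W)" by fastforce
  have "variation m (n + 2) (Suc n) = 0" by (simp add: variation_def)
  then show ?thesis unfolding ar_variation_def ar_state_Suc[OF sW] sW by simp
qed

lemma ar_variation_nonneg: "0 \<le> ar_variation T c m n"
  unfolding ar_variation_def using ar_state_bounds[of T c m n] variation_nonneg[of m] by simp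

lemma ar_variation_le: "ar_variation T c m n \<le> variation m 1 n"
  using ar_state_bounds[of T c m n] variation_add_le[of 1 "fst (ar_state T c m n)" n m]
  unfolding ar_variation_def by auto

lemma ar_variation_mono: "mono (ar_variation T c m)"
  unfolding mono_iff_le_Suc ar_variation_Suc by (simp add: ar_variation_def variation_mono)

lemma ar_restart_Suc_Suc:
  "ar_restart T c m (Suc (Suc n)) \<longleftrightarrow>
     \<not> real (Suc n - fst (ar_state T c m n) + 1) < sqrt (real T / (ar_variation T c m (Suc n) + c))"
proof -
  obtain s W where sW: "ar_state T c m n = (s, W)" by fastforce
  have "s \<le> Suc n" using ar_state_bounds[of T c m n] sW by simp
  then show ?thesis
    unfolding ar_restart_def diff_Suc_1 ar_variation_Suc ar_state_Suc[OF sW] sW by auto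
qed

lemma ar_state_in_batch:
  assumes "batch (ar_restart T c m) s b" "s - 1 \<le> n" "n < b"
  shows "ar_state T c m n = ar_state T c m (s - 1)"
  using assms(2,3)
proof (induction n rule: dec_induct)
  case base
  show ?case by simp
next
  case (step k)
  have "1 \<le> s" "ar_restart T c m s" using assms(1) by (auto simp: batch_def)
  then have "fst (ar_state T c m (s - 1)) = s" by (simp add: ar_restart_def)
  moreover have IH: "ar_state T c m k = ar_state T c m (s - 1)" using step by simp
  ultimately obtain W where sW: "ar_state T c m k = (s, W)" by (metis prod.collapse)
  have "\<not> ar_restart T c m (Suc (Suc k))" using assms(1) step by (auto simp: batch_def)
  then have "ar_state T c m (Suc k) = (s, W)"
    using sW unfolding ar_restart_Suc_Suc ar_state_Suc[OF sW] by (auto simp: ar_variation_Suc)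
  with IH sW show ?case by simp
qed

lemma ar_variation_in_batch:
  assumes "batch (ar_restart T c m) s b" "s - 1 \<le> n" "n \<le> b"
  shows "ar_variation T c m n = ar_variation T c m (s - 1) + variation m s n"
proof -
  obtain W where sW: "ar_state T c m (s - 1) = (s, W)"
    using assms(1) unfolding batch_def ar_restart_def by (metis prod.collapse)
  have start: "ar_variation T c m (s - 1) = W"
    unfolding ar_variation_def sW by (simp add: variation_def)
  show ?thesis
  proof (cases "n < b")
    case True
    then show ?thesis
      using ar_state_in_batch[OF assms(1,2)] sW start by (simp add: ar_variation_def)
  next
    case False
    with assms have "b = Suc (b - 1)" "ar_state T c m (b - 1) = (s, W)"
      using ar_state_in_batch[OF assms(1), of "b - 1"] sW by (auto simp: batch_def)
    then show ?thesis
      using False assms(3) start ar_variation_Suc[of T c m "b - 1"] by simp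
  qed
qed

lemma ar_batch_continues:
  assumes "batch (ar_restart T c m) s b" "s < b"
  shows "real (b - s) < sqrt (real T / (ar_variation T c m (b - 1) + c))"
proof -
  define k where "k = b - 2"
  have k: "b = Suc (Suc k)" using assms unfolding k_def batch_def by auto
  have "fst (ar_state T c m k) = s"
    using ar_state_in_batch[OF assms(1), of k] assms k unfolding batch_def ar_restart_def by auto
  moreover have "\<not> ar_restart T c m (Suc (Suc k))"
    using assms k unfolding batch_def by auto
  ultimately show ?thesis
    using assms(2) k unfolding ar_restart_Suc_Suc by (simp add: Suc_diff_le)
qed

lemma ar_batch_ends:
  assumes "batch (ar_restart T c m) s b" "ar_restart T c m (Suc b)"
  shows "sqrt (real T / (ar_variation T c m b + c)) \<le> real (b - s + 1)"
proof -
  have "b = Suc (b - 1)" "fst (ar_state T c m (b - 1)) = s"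
    using ar_state_in_batch[OF assms(1), of "b - 1"] assms(1) unfolding batch_def ar_restart_def by auto
  with assms(2) show ?thesis
    using ar_restart_Suc_Suc[of T c m "b - 1"] by (auto simp: not_less)
qed

lemma ar_batch_drift_le:
  assumes "batch (ar_restart T c m) s b" "0 < c"
  shows "real (b - s) * variation m s (b - 1)
           \<le> 2 * sqrt (real T) * (sqrt (ar_variation T c m b + c) - sqrt (ar_variation T c m (s - 1) + c))"
proof -
  let ?H = "ar_variation T c m"
  have "1 \<le> s" "s \<le> b" using assms(1) by (auto simp: batch_def)
  have mono: "?H (s - 1) \<le> ?H (b - 1)" "?H (b - 1) \<le> ?H b"
    using monoD[OF ar_variation_mono[of T c m]] \<open>s \<le> b\<close> by auto
  show ?thesis
  proof (cases "s = b")
    case True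
    then show ?thesis using mono by simp
  next
    case False
    then have "real (b - s) \<le> sqrt (real T / (?H (b - 1) + c))"
      using ar_batch_continues[OF assms(1)] \<open>s \<le> b\<close> by (simp add: less_imp_le)
    moreover have "0 < ?H (s - 1) + c"
      using ar_variation_nonneg[of T c m "s - 1"] assms(2) by simp
    ultimately have "real (b - s) * ((?H (b - 1) + c) - (?H (s - 1) + c))
          \<le> 2 * sqrt (real T) * (sqrt (?H (b - 1) + c) - sqrt (?H (s - 1) + c))"
      using mono by (intro mult_diff_le_sqrt_diff) auto
    moreover have "?H (b - 1) = ?H (s - 1) + variation m s (b - 1)"
      by (rule ar_variation_in_batch[OF assms(1)]) (use \<open>s \<le> b\<close> in auto)
    ultimately have "real (b - s) * variation m s (b - 1)
          \<le> 2 * sqrt (real T) * (sqrt (?H (b - 1) + c) - sqrt (?H (s - 1) + c))"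
      by simp
    also have "\<dots> \<le> 2 * sqrt (real T) * (sqrt (?H b + c) - sqrt (?H (s - 1) + c))"
      using mono by (intro mult_left_mono) auto
    finally show ?thesis .
  qed
qed

lemma ar_completed_batch_length_ge:
  assumes "batch (ar_restart T c m) s b" "ar_restart T c m (Suc b)" "0 < c"
    and "ar_variation T c m b \<le> V"
  shows "sqrt (real T / (V + c)) \<le> real (b - s + 1)"
proof -
  have "real T / (V + c) \<le> real T / (ar_variation T c m b + c)"
    using assms(3,4) ar_variation_nonneg[of T c m b] by (intro divide_left_mono) auto
  then have "sqrt (real T / (V + c)) \<le> sqrt (real T / (ar_variation T c m b + c))" by simp
  also have "\<dots> \<le> real (b - s + 1)" using ar_batch_ends[OF assms(1,2)] .
  finally show ?thesis .
qed

lemma arprod_regret_le_sqrt: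
  assumes "1 \<le> T" "(v, m) \<in> seqs T V"
  defines "c \<equiv> 1 / real T"
  shows "arprod_regret T v m
           \<le> 4 * sqrt (real T) * sqrt (V + c) + (2 * ln (real T) + 2) * (real T / sqrt (real T / (V + c)) + 1) + 2"
proof -
  define Q where "Q n = 4 * sqrt (real T) * sqrt (ar_variation T c m n + c)" for n
  have "0 < c" using assms(1) by (simp add: c_def)
  have var_le: "ar_variation T c m n \<le> V" if "n \<le> T" for n
    using ar_variation_le[of T c m n] variation_mono[of 1 1 n T m] seqs_variation_le[OF assms(2)] that
    by linarith
  then have "0 \<le> V" using ar_variation_nonneg[of T c m 0] by fastforce
  have "arprod_regret T v m = prod_regret T T (1 / real T) (1/2) (ar_restart T c m) v m"
    by (simp add: arprod_regret_def c_def)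
  also have "\<dots> \<le> Q T - Q 0 + (2 * ln (real T) + 2) * (real T / sqrt (real T / (V + c)) + 1) + 2"
  proof (rule prod_regret_le)
    show "ar_restart T c m 1" by (simp add: ar_restart_def)
    show "0 < sqrt (real T / (V + c))" using assms(1) \<open>0 < c\<close> \<open>0 \<le> V\<close> by simp
  next
    fix s b assume "batch (ar_restart T c m) s b" "b < T" "ar_restart T c m (Suc b)"
    then show "sqrt (real T / (V + c)) \<le> real (b - s + 1)"
      using ar_completed_batch_length_ge \<open>0 < c\<close> var_le by simp
  next
    fix s b assume "batch (ar_restart T c m) s b"
    from ar_batch_drift_le[OF this \<open>0 < c\<close>]
    show "2 * real (b - s) * variation m s (b - 1) \<le> Q b - Q (s - 1)"
      unfolding Q_def by (simp add: algebra_simps)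
  qed (use assms seqs_bounded in auto)
  also have "Q T - Q 0 \<le> 4 * sqrt (real T) * sqrt (V + c)"
  proof -
    have "Q T \<le> 4 * sqrt (real T) * sqrt (V + c)"
      unfolding Q_def using var_le[of T] by (intro mult_left_mono) auto
    moreover have "0 \<le> Q 0" unfolding Q_def using ar_variation_nonneg[of T c m 0] \<open>0 < c\<close> by simp
    ultimately show ?thesis by simp
  qed
  finally show ?thesis by simp
qed

lemma arprod_regret_le:
  assumes "1 \<le> T" "(v, m) \<in> seqs T V"
  shows "arprod_regret T v m \<le> (2 * ln (real T) + 6) * sqrt (real T * V + 1) + 2 * ln (real T) + 4"
proof -
  have "0 \<le> V" using seqs_variation_le[OF assms(2)] variation_nonneg[of m 1 T] by linarith
  have "sqrt (real T) * sqrt (V + 1 / real T) = sqrt (real T * V + 1)"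
    using assms(1) by (simp add: real_sqrt_mult[symmetric] distrib_left)
  moreover have "real T / sqrt (real T / (V + 1 / real T)) = sqrt (real T) * sqrt (V + 1 / real T)"
    using \<open>0 \<le> V\<close> by (simp add: divide_sqrt_divide real_sqrt_mult)
  ultimately show ?thesis
    using arprod_regret_le_sqrt[OF assms] by (simp add: algebra_simps)
qed

section \<open>Asymptotic bounds\<close>

lemma arprod_bound_le:
  fixes t V :: real
  assumes "3 \<le> t" "0 \<le> V"
  shows "(2 * ln t + 6) * sqrt (t * V + 1) + 2 * ln t + 4 \<le> 22 * ln t * max (sqrt (t * V)) 1"
proof -
  define l M where "l = ln t" and "M = max (sqrt (t * V)) 1"
  have "1 \<le> l" "1 \<le> M" unfolding l_def M_def using ln_ge_one[OF assms(1)] by auto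
  have "sqrt (t * V + 1) \<le> sqrt (t * V) + 1"
    using assms by (intro sqrt_add_le_add_sqrt[of _ 1, simplified]) auto
  also have "\<dots> \<le> 2 * M" unfolding M_def by linarith
  finally have "(2 * l + 6) * sqrt (t * V + 1) \<le> (2 * l + 6) * (2 * M)"
    using \<open>1 \<le> l\<close> by (intro mult_left_mono) auto
  moreover have "M \<le> l * M" "l \<le> l * M" "1 \<le> l * M"
    using \<open>1 \<le> l\<close> \<open>1 \<le> M\<close> by (auto intro: mult_right_mono[of 1 l M, simplified]
        mult_left_mono[of 1 M l, simplified] order_trans)
  ultimately show ?thesis unfolding l_def[symmetric] M_def[symmetric] by (simp add: algebra_simps)
qed

lemma fixed_bound_le:
  fixes t V D c1 c2 :: real
  assumes "3 \<le> t" "0 < V" "0 < c1" "c1 * sqrt (t / V) \<le> D" "D \<le> c2 * sqrt (t / V)"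
  shows "2 * D * V + (2 * ln t + 2) * (t / D + 1) + 2
           \<le> (2 * c2 + 4 / c1 + 6) * ln t * max (sqrt (t * V)) 1"
proof -
  define l M g where "l = ln t" and "M = max (sqrt (t * V)) 1" and "g = sqrt (t / V)"
  have "1 \<le> l" "1 \<le> M" unfolding l_def M_def using ln_ge_one[OF assms(1)] by auto
  then have lM: "M \<le> l * M" "l \<le> l * M" "1 \<le> l * M"
    by (auto simp: mult_le_cancel_right1 mult_le_cancel_left1 intro: order_trans[OF \<open>1 \<le> l\<close>])
  have "0 < g" unfolding g_def using assms(1,2) by simp
  have "0 < D" using mult_pos_pos[OF assms(3) \<open>0 < g\<close>] assms(4) unfolding g_def by linarith
  then have "0 < c2 * g" using assms(5) unfolding g_def by linarith
  then have "0 < c2" using \<open>0 < g\<close> by (simp add: zero_less_mult_iff)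
  have "D * V \<le> c2 * (g * V)" using assms(2,5) unfolding g_def[symmetric] by (simp add: mult_right_mono)
  also have "\<dots> \<le> c2 * M"
    unfolding g_def M_def using assms(1,2) \<open>0 < c2\<close> by (simp add: sqrt_divide_mult)
  also have "\<dots> \<le> c2 * (l * M)" using lM \<open>0 < c2\<close> by simp
  finally have DV: "D * V \<le> c2 * (l * M)" .
  have "t / D \<le> t / (c1 * g)"
    using assms(1,3,4) \<open>0 < g\<close> \<open>0 < D\<close> unfolding g_def[symmetric] by (intro divide_left_mono) auto
  also have "\<dots> = (t / g) / c1" by (simp add: mult.commute)
  also have "\<dots> = sqrt (t * V) / c1"
    unfolding g_def using assms(1,2) by (simp add: divide_sqrt_divide)
  also have "\<dots> \<le> M / c1" unfolding M_def using assms(3) by (simp add: divide_right_mono)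
  finally have "(2 * l + 2) * (t / D + 1) \<le> (4 * l) * (M / c1 + 1)"
    using \<open>1 \<le> l\<close> \<open>0 < D\<close> assms(1) by (intro mult_mono) auto
  also have "\<dots> = 4 / c1 * (l * M) + 4 * l" by (simp add: field_simps)
  finally show ?thesis using DV lM unfolding l_def[symmetric] M_def[symmetric] by (simp add: algebra_simps)
qed

lemma zero_in_seqs: "0 \<le> V \<Longrightarrow> ((\<lambda>_. 0), (\<lambda>_. 0)) \<in> seqs T V"
  unfolding seqs_def by simp

lemma soft_bigO_SUP_seqsI:
  fixes f :: "nat \<Rightarrow> (nat \<Rightarrow> real) \<Rightarrow> (nat \<Rightarrow> real) \<Rightarrow> real"
  assumes "\<And>T. 0 \<le> V T"
    and "eventually (\<lambda>T. \<forall>v m. (v, m) \<in> seqs T (V T) \<longrightarrow> f T v m \<le> C * ln (real T) * g T) at_top"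
  shows "soft_bigO (\<lambda>T. SUP vm\<in>seqs T (V T). f T (fst vm) (snd vm)) g"
  unfolding soft_bigO_def
proof (intro exI)
  show "eventually (\<lambda>T. (SUP vm\<in>seqs T (V T). f T (fst vm) (snd vm)) \<le> C * ln (real T) ^ 1 * g T) at_top"
    using assms(2)
  proof eventually_elim
    case (elim T)
    have "seqs T (V T) \<noteq> {}" using zero_in_seqs[of "V T" T] assms(1) by blast
    with elim show ?case by (intro cSUP_least) auto
  qed
qed

lemma bigtheta_nonnegE:
  fixes f g :: "nat \<Rightarrow> real"
  assumes "f \<in> \<Theta>(g)" "\<And>n. 0 \<le> f n" "\<And>n. 0 \<le> g n"
  obtains c1 c2 where "0 < c1" "0 < c2" "eventually (\<lambda>n. c1 * g n \<le> f n \<and> f n \<le> c2 * g n) at_top"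
proof -
  obtain c2 where "0 < c2" and upper: "eventually (\<lambda>n. norm (f n) \<le> c2 * norm (g n)) at_top"
    using bigthetaD1[OF assms(1)] by (elim landau_o.bigE)
  obtain c1 where "0 < c1" and lower: "eventually (\<lambda>n. c1 * norm (g n) \<le> norm (f n)) at_top"
    using bigthetaD2[OF assms(1)] by (elim landau_omega.bigE)
  have "eventually (\<lambda>n. c1 * g n \<le> f n \<and> f n \<le> c2 * g n) at_top"
    using eventually_conj[OF lower upper] assms(2,3) by simp
  with \<open>0 < c1\<close> \<open>0 < c2\<close> show ?thesis by (rule that)
qed

lemma fixed_regret_soft_bigO:
  assumes "\<And>T. 0 < V T" "\<And>T. 1 \<le> Delta T"
    and "(\<lambda>T. real (Delta T)) \<in> \<Theta>(\<lambda>T. sqrt (real T / V T))"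
  shows "soft_bigO (\<lambda>T. SUP vm\<in>seqs T (V T). fixed_regret T (Delta T) (fst vm) (snd vm))
                   (\<lambda>T. max (sqrt (real T * V T)) 1)"
proof -
  obtain c1 c2 where "0 < c1" "0 < c2" and Delta_bounds: "eventually (\<lambda>T.
      c1 * sqrt (real T / V T) \<le> real (Delta T) \<and> real (Delta T) \<le> c2 * sqrt (real T / V T)) at_top"
    using assms(3) by (rule bigtheta_nonnegE) (simp_all add: less_imp_le[OF assms(1)])
  show ?thesis
  proof (rule soft_bigO_SUP_seqsI[where f = "\<lambda>T. fixed_regret T (Delta T)"])
    show "eventually (\<lambda>T. \<forall>v m. (v, m) \<in> seqs T (V T) \<longrightarrow> fixed_regret T (Delta T) v m
            \<le> (2 * c2 + 4 / c1 + 6) * ln (real T) * max (sqrt (real T * V T)) 1) at_top"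
      using eventually_ge_at_top[of 3] Delta_bounds
    proof eventually_elim
      case (elim T)
      show ?case
      proof (intro allI impI)
        fix v m assume "(v, m) \<in> seqs T (V T)"
        with elim have "fixed_regret T (Delta T) v m \<le> 2 * real (Delta T) * V T
            + (2 * ln (real T) + 2) * (real T / real (Delta T) + 1) + 2"
          by (intro fixed_regret_le assms(2)) auto
        also have "\<dots> \<le> (2 * c2 + 4 / c1 + 6) * ln (real T) * max (sqrt (real T * V T)) 1"
          using elim assms(1) \<open>0 < c1\<close> by (intro fixed_bound_le) auto
        finally show "fixed_regret T (Delta T) v m
            \<le> (2 * c2 + 4 / c1 + 6) * ln (real T) * max (sqrt (real T * V T)) 1" .
      qed
    qed
  qed (use assms(1) less_imp_le in auto)
qed

lemma arprod_regret_soft_bigO: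
  assumes "\<And>T. 0 \<le> V T"
  shows "soft_bigO (\<lambda>T. SUP vm\<in>seqs T (V T). arprod_regret T (fst vm) (snd vm))
                   (\<lambda>T. max (sqrt (real T * V T)) 1)"
proof (rule soft_bigO_SUP_seqsI[where f = arprod_regret and C = 22, OF assms])
  show "eventually (\<lambda>T. \<forall>v m. (v, m) \<in> seqs T (V T) \<longrightarrow> arprod_regret T v m
          \<le> 22 * ln (real T) * max (sqrt (real T * V T)) 1) at_top"
    using eventually_ge_at_top[of 3]
  proof eventually_elim
    case (elim T)
    show ?case
    proof (intro allI impI)
      fix v m assume "(v, m) \<in> seqs T (V T)"
      with elim have "arprod_regret T v m
          \<le> (2 * ln (real T) + 6) * sqrt (real T * V T + 1) + 2 * ln (real T) + 4"
        by (intro arprod_regret_le) auto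
      also have "\<dots> \<le> 22 * ln (real T) * max (sqrt (real T * V T)) 1"
        using elim assms by (intro arprod_bound_le) auto
      finally show "arprod_regret T v m \<le> 22 * ln (real T) * max (sqrt (real T * V T)) 1" .
    qed
  qed
qed

theorem theorem1:
  fixes V :: "nat \<Rightarrow> real"
  assumes "\<And>T. V T \<ge> 0"
    and "V \<in> o(\<lambda>T. real T)"
  shows "(\<forall>Delta :: nat \<Rightarrow> nat.
            (\<forall>T. V T > 0) \<and> (\<forall>T. Delta T \<ge> 1)
            \<and> (\<lambda>T. real (Delta T)) \<in> \<Theta>(\<lambda>T. sqrt (real T / V T))
            \<longrightarrow> soft_bigO (\<lambda>T. SUP vm\<in>seqs T (V T). fixed_regret T (Delta T) (fst vm) (snd vm))
                          (\<lambda>T. max (sqrt (real T * V T)) 1))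
       \<and> soft_bigO (\<lambda>T. SUP vm\<in>seqs T (V T). arprod_regret T (fst vm) (snd vm))
                   (\<lambda>T. max (sqrt (real T * V T)) 1)"
  using fixed_regret_soft_bigO[of V] arprod_regret_soft_bigO[of V, OF assms(1)] by blast

end
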